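(* $A_3(16,11)\le 29$.
   Context: $[q]=\{0,\dots,q-1\}$; Hamming distance between words of $[q]^n$ is the number of differing coordinates; $A_q(n,d)$ is the maximum cardinality of a code $C\subseteq[q]^n$ in which any two distinct codewords have Hamming distance at least $d$. *)

theory Defs
  imports Main "HOL-Library.FuncSet"
begin

definition words :: "nat \<Rightarrow> nat \<Rightarrow> (nat \<Rightarrow> nat) set" where
  "words q n = ({0..<n} \<rightarrow>\<^sub>E {0..<q})"

definition hamming :: "nat \<Rightarrow> (nat \<Rightarrow> nat) \<Rightarrow> (nat \<Rightarrow> nat) \<Rightarrow> nat" where
  "hamming n x y = card {i \<in> {0..<n}. x i \<noteq> y i}"

definition is_code :: "nat \<Rightarrow> nat \<Rightarrow> nat \<Rightarrow> (nat \<Rightarrow> nat) set \<Rightarrow> bool" where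
  "is_code q n d C \<longleftrightarrow> C \<subseteq> words q n \<and>
     (\<forall>x\<in>C. \<forall>y\<in>C. x \<noteq> y \<longrightarrow> hamming n x y \<ge> d)"

text \<open>A_q(n,d): maximum cardinality of such a code (the set of words is finite,
  so the maximum exists).\<close>
definition A :: "nat \<Rightarrow> nat \<Rightarrow> nat \<Rightarrow> nat" where
  "A q n d = Max (card ` {C. is_code q n d C})"

end

theory Submission
  imports Defs "HOL-Analysis.Convex"
begin

text \<open>Suppose a ternary code of length 16 and minimum distance 11 has 30 words, so distinct
  words agree in at most 5 positions. Double counting agreements inside a set S of m
  codewords sharing a symbol in some coordinate gives, by Cauchy--Schwarz in each of the
  other 15 coordinates, m^2 + 15 ceil(m^2/3) \<le> m (16 + 5 (m - 1)). This rules out m = 11, so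
  every symbol occurs exactly 10 times in every coordinate, and for m = 10 it forces all
  pairs in S to agree in exactly 5 positions. Hence any two distinct codewords agree in 0
  or 5 positions; but the agreements of a fixed word with the 29 others add up to
  16 * 10 - 16 = 144, which is not a multiple of 5.\<close>

lemma square_sum_le_card_mult_sum_squares:
  fixes f :: "'a \<Rightarrow> nat"
  shows "(\<Sum>i\<in>I. f i)\<^sup>2 \<le> card I * (\<Sum>i\<in>I. (f i)\<^sup>2)"
proof -
  have "real ((\<Sum>i\<in>I. f i)\<^sup>2) \<le> real (card I * (\<Sum>i\<in>I. (f i)\<^sup>2))"
    using sum_squared_le_sum_of_squares[of "\<lambda>i. real (f i)" I] by (simp add: mult.commute)
  then show ?thesis
    by (simp only: of_nat_le_iff)
qed

lemma le_div_ceiling: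
  fixes a b q :: nat
  assumes "a \<le> q * b"
  shows "(a + q - 1) div q \<le> b"
proof (cases "q = 0")
  case False
  have "(a + q - 1) div q \<le> (q * b + (q - 1)) div q"
    using assms False by (intro div_le_mono) simp
  also have "\<dots> = b"
    using False by (subst div_mult_self4) simp_all
  finally show ?thesis .
qed simp

definition agreement :: "nat \<Rightarrow> (nat \<Rightarrow> nat) \<Rightarrow> (nat \<Rightarrow> nat) \<Rightarrow> nat" where
  "agreement n x y = card {i \<in> {0..<n}. x i = y i}"

lemma hamming_add_agreement: "hamming n x y + agreement n x y = n"
proof -
  have "{i \<in> {0..<n}. x i \<noteq> y i} \<union> {i \<in> {0..<n}. x i = y i} = {0..<n}"
    by auto
  then have "card {i \<in> {0..<n}. x i \<noteq> y i} + card {i \<in> {0..<n}. x i = y i} = card {0..<n}"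
    by (subst card_Un_disjoint[symmetric]) auto
  then show ?thesis
    unfolding hamming_def agreement_def by simp
qed

lemma agreement_self [simp]: "agreement n x x = n"
  unfolding agreement_def by simp

lemma agreement_eq_sum: "agreement n x y = (\<Sum>i<n. if x i = y i then 1 else 0)"
  unfolding agreement_def by (simp add: sum.If_cases atLeast0LessThan Int_def conj_commute)

lemma agreement_le_in_code:
  assumes "is_code q n d C" "x \<in> C" "y \<in> C" "x \<noteq> y"
  shows "agreement n x y \<le> n - d"
  using assms hamming_add_agreement[of n x y] unfolding is_code_def by force

lemma finite_words: "finite (words q n)"
  unfolding words_def by (simp add: finite_PiE)

lemma words_less: "x \<in> words q n \<Longrightarrow> i < n \<Longrightarrow> x i < q"
  unfolding words_def by auto

lemma is_code_subset: "is_code q n d C \<Longrightarrow> D \<subseteq> C \<Longrightarrow> is_code q n d D"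
  unfolding is_code_def by blast

lemma is_code_finite: "is_code q n d C \<Longrightarrow> finite C"
  unfolding is_code_def using finite_words finite_subset by blast

definition symbol_count :: "(nat \<Rightarrow> nat) set \<Rightarrow> nat \<Rightarrow> nat \<Rightarrow> nat" where
  "symbol_count S i t = card {x \<in> S. x i = t}"

lemma sum_agreement_eq_sum_symbol_count:
  assumes "finite S"
  shows "(\<Sum>y\<in>S. agreement n x y) = (\<Sum>i<n. symbol_count S i (x i))"
proof -
  have "(\<Sum>y\<in>S. agreement n x y) = (\<Sum>i<n. \<Sum>y\<in>S. if y i = x i then 1 else 0)"
    by (simp add: agreement_eq_sum eq_commute sum.swap[of _ S])
  also have "\<dots> = (\<Sum>i<n. symbol_count S i (x i))"
    using assms by (simp add: symbol_count_def sum.If_cases Int_def conj_commute)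
  finally show ?thesis .
qed

lemma sum_symbol_count:
  assumes "finite S" "\<forall>u\<in>S. u i < q"
  shows "(\<Sum>t<q. symbol_count S i t) = card S"
  using sum.group[of S "{..<q}" "\<lambda>u. u i" "\<lambda>_. 1::nat"] assms
  by (auto simp: symbol_count_def)

lemma sum_symbol_count_of_words:
  assumes "finite S" "\<forall>u\<in>S. u i < q"
  shows "(\<Sum>u\<in>S. symbol_count S i (u i)) = (\<Sum>t<q. (symbol_count S i t)\<^sup>2)"
proof -
  have "(\<Sum>u\<in>S. symbol_count S i (u i))
      = (\<Sum>t<q. \<Sum>u\<in>{u. u \<in> S \<and> u i = t}. symbol_count S i (u i))"
    using assms by (intro sum.group[symmetric]) auto
  also have "\<dots> = (\<Sum>t<q. (symbol_count S i t)\<^sup>2)"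
    by (simp add: symbol_count_def power2_eq_square)
  finally show ?thesis .
qed

lemma square_card_le_sum_symbol_count:
  assumes "finite S" "\<forall>u\<in>S. u i < q"
  shows "(card S)\<^sup>2 \<le> q * (\<Sum>u\<in>S. symbol_count S i (u i))"
  using square_sum_le_card_mult_sum_squares[of "symbol_count S i" "{..<q}"]
    sum_symbol_count[OF assms] sum_symbol_count_of_words[OF assms]
  by simp

lemma symbol_count_eq_if_le:
  assumes "finite S" "\<forall>u\<in>S. u i < q" "card S = q * m"
    and le: "\<forall>t<q. symbol_count S i t \<le> m" and "t < q"
  shows "symbol_count S i t = m"
proof (rule ccontr)
  assume "symbol_count S i t \<noteq> m"
  with le \<open>t < q\<close> have "(\<Sum>t<q. symbol_count S i t) < (\<Sum>t<q. m)"
    by (intro sum_strict_mono_ex1) (auto intro: le_neq_implies_less)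
  with assms(1-3) show False
    by (simp add: sum_symbol_count)
qed

lemma sum_sum_agreement_lower_bound:
  assumes S: "S \<subseteq> words q n" and j: "j < n" "\<forall>u\<in>S. u j = s"
  shows "(card S)\<^sup>2 + (n - 1) * (((card S)\<^sup>2 + q - 1) div q)
           \<le> (\<Sum>u\<in>S. \<Sum>v\<in>S. agreement n u v)"
proof -
  let ?Q = "\<lambda>i. \<Sum>u\<in>S. symbol_count S i (u i)"
  have fin: "finite S"
    using S finite_words finite_subset by blast
  have Qj: "?Q j = (card S)\<^sup>2"
  proof -
    have "{v \<in> S. v j = s} = S"
      using j(2) by auto
    then have "symbol_count S j (u j) = card S" if "u \<in> S" for u
      using that j(2) by (simp add: symbol_count_def)
    then show ?thesis
      by (simp add: power2_eq_square)
  qed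
  have Qi: "((card S)\<^sup>2 + q - 1) div q \<le> ?Q i" if "i \<in> {..<n} - {j}" for i
    using that S words_less fin by (intro le_div_ceiling square_card_le_sum_symbol_count) auto
  have "(\<Sum>u\<in>S. \<Sum>v\<in>S. agreement n u v) = (\<Sum>i<n. ?Q i)"
    using fin by (simp add: sum_agreement_eq_sum_symbol_count sum.swap[of _ S])
  also have "\<dots> = ?Q j + (\<Sum>i\<in>{..<n} - {j}. ?Q i)"
    using j by (simp add: sum.remove)
  finally show ?thesis
    using Qj sum_bounded_below[of "{..<n} - {j}", OF Qi] j by simp
qed

lemma agreement_le_in_code_Diff:
  assumes "is_code q n d S" "u \<in> S" "v \<in> S - {u}"
  shows "agreement n u v \<le> n - d"
  using assms by (intro agreement_le_in_code) auto

lemma sum_agreement_row_le: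
  assumes S: "is_code q n d S" and u: "u \<in> S"
  shows "(\<Sum>v\<in>S. agreement n u v) \<le> n + (n - d) * (card S - 1)"
proof -
  have "(\<Sum>v\<in>S - {u}. agreement n u v) \<le> card (S - {u}) * (n - d)"
    using sum_bounded_above[of "S - {u}" "agreement n u" "n - d"] agreement_le_in_code_Diff[OF S u]
    by simp
  then show ?thesis
    using is_code_finite[OF S] u by (simp add: sum.remove mult.commute)
qed

lemma sum_agreement_row_less:
  assumes S: "is_code q n d S" and u: "u \<in> S"
    and y: "y \<in> S" "y \<noteq> u" "agreement n u y < n - d"
  shows "(\<Sum>v\<in>S. agreement n u v) < n + (n - d) * (card S - 1)"
proof -
  have "(\<Sum>v\<in>S - {u}. agreement n u v) < (\<Sum>v\<in>S - {u}. n - d)"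
  proof (rule sum_strict_mono_ex1)
    show "finite (S - {u})"
      using is_code_finite[OF S] by simp
    show "\<forall>v\<in>S - {u}. agreement n u v \<le> n - d"
      using agreement_le_in_code_Diff[OF S u] by blast
    have "y \<in> S - {u}"
      using y(1,2) by simp
    then show "\<exists>v\<in>S - {u}. agreement n u v < n - d"
      using y(3) by blast
  qed
  then show ?thesis
    using is_code_finite[OF S] u by (simp add: sum.remove mult.commute)
qed

lemma sum_sum_agreement_le:
  assumes "is_code q n d S"
  shows "(\<Sum>u\<in>S. \<Sum>v\<in>S. agreement n u v) \<le> card S * (n + (n - d) * (card S - 1))"
  using sum_bounded_above[of S "\<lambda>u. \<Sum>v\<in>S. agreement n u v"] sum_agreement_row_le[OF assms]
  by simp

lemma sum_sum_agreement_less: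
  assumes S: "is_code q n d S"
    and xy: "x \<in> S" "y \<in> S" "y \<noteq> x" "agreement n x y < n - d"
  shows "(\<Sum>u\<in>S. \<Sum>v\<in>S. agreement n u v) < card S * (n + (n - d) * (card S - 1))"
proof -
  have "(\<Sum>u\<in>S. \<Sum>v\<in>S. agreement n u v) < (\<Sum>u\<in>S. n + (n - d) * (card S - 1))"
  proof (rule sum_strict_mono_ex1)
    show "finite S"
      using is_code_finite[OF S] .
    show "\<forall>u\<in>S. (\<Sum>v\<in>S. agreement n u v) \<le> n + (n - d) * (card S - 1)"
      using sum_agreement_row_le[OF S] by blast
    show "\<exists>u\<in>S. (\<Sum>v\<in>S. agreement n u v) < n + (n - d) * (card S - 1)"
      using sum_agreement_row_less[OF S xy] xy(1) by blast
  qed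
  then show ?thesis
    by simp
qed

lemma symbol_count_le_10:
  assumes C: "is_code 3 16 11 C" and i: "i < 16"
  shows "symbol_count C i t \<le> 10"
proof (rule ccontr)
  assume "\<not> symbol_count C i t \<le> 10"
  then have "11 \<le> card {x \<in> C. x i = t}"
    unfolding symbol_count_def by simp
  then obtain S where S: "S \<subseteq> {x \<in> C. x i = t}" "card S = 11"
    by (rule obtain_subset_with_card_n)
  then have "is_code 3 16 11 S" "S \<subseteq> words 3 16" "\<forall>u\<in>S. u i = t"
    using C is_code_subset unfolding is_code_def by blast+
  have "736 \<le> (\<Sum>u\<in>S. \<Sum>v\<in>S. agreement 16 u v)"
    using sum_sum_agreement_lower_bound[OF \<open>S \<subseteq> words 3 16\<close> i \<open>\<forall>u\<in>S. u i = t\<close>] S(2)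
    by simp
  moreover have "(\<Sum>u\<in>S. \<Sum>v\<in>S. agreement 16 u v) \<le> 726"
    using sum_sum_agreement_le[OF \<open>is_code 3 16 11 S\<close>] S(2) by simp
  ultimately show False
    by simp
qed

lemma agreement_in_symbol_class_10:
  assumes C: "is_code 3 16 11 C" and i: "i < 16" and count: "symbol_count C i t = 10"
    and xy: "x \<in> C" "y \<in> C" "x \<noteq> y" "x i = t" "y i = t"
  shows "agreement 16 x y = 5"
proof (rule ccontr)
  assume "agreement 16 x y \<noteq> 5"
  then have less: "agreement 16 x y < 16 - 11"
    using agreement_le_in_code[OF C xy(1-3)] by simp
  define S where "S = {x \<in> C. x i = t}"
  have S: "is_code 3 16 11 S" "S \<subseteq> words 3 16" "\<forall>u\<in>S. u i = t" "card S = 10"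
    "x \<in> S" "y \<in> S"
    using C is_code_subset[OF C] count xy unfolding S_def is_code_def symbol_count_def by auto
  have "610 \<le> (\<Sum>u\<in>S. \<Sum>v\<in>S. agreement 16 u v)"
    using sum_sum_agreement_lower_bound[OF S(2) i S(3)] S(4) by simp
  moreover have "(\<Sum>u\<in>S. \<Sum>v\<in>S. agreement 16 u v) < 610"
    using sum_sum_agreement_less[OF S(1) S(5,6) xy(3)[symmetric] less] S(4) by simp
  ultimately show False
    by simp
qed

lemma card_code_3_16_11_le: "is_code 3 16 11 C \<Longrightarrow> card C \<le> 29"
proof (rule ccontr)
  assume "is_code 3 16 11 C" "\<not> card C \<le> 29"
  then have "30 \<le> card C"
    by simp
  then obtain D where "D \<subseteq> C" "card D = 30"
    by (rule obtain_subset_with_card_n)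
  then have D: "is_code 3 16 11 D" "finite D" "card D = 30"
    using \<open>is_code 3 16 11 C\<close> is_code_subset is_code_finite by blast+
  have less3: "\<forall>u\<in>D. u i < 3" if "i < 16" for i
    using D(1) that words_less unfolding is_code_def by blast
  have count: "symbol_count D i (u i) = 10" if "u \<in> D" "i < 16" for u i
    using D less3 that symbol_count_le_10 by (intro symbol_count_eq_if_le) auto
  obtain x where x: "x \<in> D"
    using D(3) by fastforce
  have "(\<Sum>y\<in>D. agreement 16 x y) = 160"
    using D(2) count[OF x] by (simp add: sum_agreement_eq_sum_symbol_count)
  then have "(\<Sum>y\<in>D - {x}. agreement 16 x y) = 144"
    using D(2) x by (simp add: sum.remove)
  moreover have "5 dvd agreement 16 x y" if "y \<in> D - {x}" for y
  proof (cases "agreement 16 x y = 0")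
    case False
    then have "{i \<in> {0..<16}. x i = y i} \<noteq> {}"
      unfolding agreement_def by (metis card.empty)
    then obtain i where i: "i < 16" "x i = y i"
      by auto
    have "y \<in> D" "x \<noteq> y"
      using that by auto
    with i have "agreement 16 x y = 5"
      using agreement_in_symbol_class_10[OF D(1) i(1) count[OF x i(1)] x] by simp
    then show ?thesis
      by simp
  qed simp
  then have "5 dvd (\<Sum>y\<in>D - {x}. agreement 16 x y)"
    by (rule dvd_sum)
  ultimately show False
    by simp
qed

lemma A_le:
  assumes "\<And>C. is_code q n d C \<Longrightarrow> card C \<le> N"
  shows "A q n d \<le> N"
proof -
  have "card ` {C. is_code q n d C} \<subseteq> {..N}"
    using assms by auto
  moreover have "is_code q n d {}"
    unfolding is_code_def by simp
  ultimately show ?thesis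
    unfolding A_def by (subst Max_le_iff) (auto intro: finite_subset)
qed

theorem proposition5p11:
  shows "A 3 16 11 \<le> 29"
  using card_code_3_16_11_le by (rule A_le)

end
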